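(* For $\lambda,\mu\in\mathbb{C}$ and pure-parity $f\in\mathcal{F}_\lambda$, $g\in\mathcal{F}_\mu$, define $$(f,g)=\mu\,\overline{D}(f)\,g-(-1)^{\sigma(f)}\,\lambda\,f\,\overline{D}(g)\in\mathcal{F}_{\lambda+\mu+\frac12},\qquad [f,g]=\mu\,f'\,g-\lambda\,f\,g'-(-1)^{\sigma(f)}\,\tfrac12\,\overline{D}(f)\,\overline{D}(g)\in\mathcal{F}_{\lambda+\mu+1}.$$ Then for every pure-parity $f\in\mathcal{F}_{-1}$ and all $\mu,\nu\in\mathbb{C}$ and pure-parity $g\in\mathcal{F}_\mu$, $h\in\mathcal{F}_\nu$, $$[f,(g,h)]=(-1)^{\sigma(f)}\,([f,g],h)+(-1)^{\sigma(f)(\sigma(g)+1)}\,(g,[f,h]).$$ That is, the odd operation $(\,,\,)$ on $\mathcal{F}=\bigoplus_\lambda\mathcal{F}_\lambda$ is invariant under the Lie superalgebra $\mathcal{K}(1)=(\mathcal{F}_{-1},[\,,\,])$.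
   Context: The supercircle $S^{1|1}$ has superalgebra of functions $C^\infty_{\mathbb{C}}(S^1)[\xi]$: elements $f=f_0(x)+\xi f_1(x)$ with $f_0,f_1$ smooth complex functions on $S^1$, $x$ the (affine) coordinate, $\xi$ odd with $\xi^2=0$, $x\xi=\xi x$. Parity: $\sigma(f_0)=0$, $\sigma(\xi f_1)=1$. Write $f'=\partial_x f=f_0'+\xi f_1'$, $\partial_\xi f=f_1$, and $\overline{D}=\partial_\xi-\xi\,\partial_x$. For $\lambda\in\mathbb{C}$, $\mathcal{F}_\lambda$ denotes a copy of $C^\infty_{\mathbb{C}}(S^{1|1})$ labelled by the weight $\lambda$; in each bracket the weights used in the formula are those of the spaces the arguments belong to (e.g. in $[f,g]$ with $f\in\mathcal{F}_{-1}$, $g\in\mathcal{F}_\mu$ one uses $\lambda=-1$; in $[f,(g,h)]$ the second argument has weight $\mu+\nu+\frac12$). *)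

theory Defs
  imports "HOL-Analysis.Analysis"
begin

text \<open>A superfunction f = f0(x) + xi f1(x) on the supercircle S^{1|1} is represented
  by the pair (f0, f1) of complex functions of the affine coordinate x.
  S^1 = R / Z, so functions on S^1 are 1-periodic functions on R.\<close>

type_synonym sfun = "(real \<Rightarrow> complex) \<times> (real \<Rightarrow> complex)"

definition smooth_fun :: "(real \<Rightarrow> complex) \<Rightarrow> bool" where
  "smooth_fun u \<longleftrightarrow> (\<exists>d. d 0 = u \<and> (\<forall>n x. (d n has_vector_derivative d (Suc n) x) (at x)))"

definition circle_fun :: "(real \<Rightarrow> complex) \<Rightarrow> bool" where
  "circle_fun u \<longleftrightarrow> smooth_fun u \<and> (\<forall>x. u (x + 1) = u x)"

definition is_sfun :: "sfun \<Rightarrow> bool" where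
  "is_sfun f \<longleftrightarrow> circle_fun (fst f) \<and> circle_fun (snd f)"

definition hom :: "nat \<Rightarrow> sfun \<Rightarrow> bool" where
  "hom s f \<longleftrightarrow> (even s \<longrightarrow> snd f = (\<lambda>x. 0)) \<and> (odd s \<longrightarrow> fst f = (\<lambda>x. 0))"

definition sadd :: "sfun \<Rightarrow> sfun \<Rightarrow> sfun" where
  "sadd f g = ((\<lambda>x. fst f x + fst g x), (\<lambda>x. snd f x + snd g x))"

definition ssub :: "sfun \<Rightarrow> sfun \<Rightarrow> sfun" where
  "ssub f g = ((\<lambda>x. fst f x - fst g x), (\<lambda>x. snd f x - snd g x))"

definition sscale :: "complex \<Rightarrow> sfun \<Rightarrow> sfun" where
  "sscale c f = ((\<lambda>x. c * fst f x), (\<lambda>x. c * snd f x))"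

text \<open>(f0 + xi f1)(g0 + xi g1) = f0 g0 + xi (f1 g0 + f0 g1), using xi^2 = 0.\<close>
definition smult :: "sfun \<Rightarrow> sfun \<Rightarrow> sfun" where
  "smult f g = ((\<lambda>x. fst f x * fst g x), (\<lambda>x. snd f x * fst g x + fst f x * snd g x))"

definition sderiv :: "sfun \<Rightarrow> sfun" where
  "sderiv f = ((\<lambda>x. vector_derivative (fst f) (at x)), (\<lambda>x. vector_derivative (snd f) (at x)))"

text \<open>Dbar = d/dxi - xi d/dx, so Dbar(f0 + xi f1) = f1 - xi f0'.\<close>
definition Dbar :: "sfun \<Rightarrow> sfun" where
  "Dbar f = (snd f, (\<lambda>x. - vector_derivative (fst f) (at x)))"

definition pbr :: "complex \<Rightarrow> complex \<Rightarrow> nat \<Rightarrow> sfun \<Rightarrow> sfun \<Rightarrow> sfun" where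
  "pbr lam mu s f g = ssub (sscale mu (smult (Dbar f) g)) (sscale ((-1) ^ s * lam) (smult f (Dbar g)))"

definition lbr :: "complex \<Rightarrow> complex \<Rightarrow> nat \<Rightarrow> sfun \<Rightarrow> sfun \<Rightarrow> sfun" where
  "lbr lam mu s f g = ssub (ssub (sscale mu (smult (sderiv f) g)) (sscale lam (smult f (sderiv g))))
      (sscale ((-1) ^ s / 2) (smult (Dbar f) (Dbar g)))"

end

theory Submission
  imports Defs
begin

text \<open>Both sides are expanded componentwise with the Leibniz rule. Representing each smooth
  component by the tower of its derivatives makes every derivative that occurs a component of
  the tower, so that in each of the eight parity patterns of f, g, h the identity becomes a
  polynomial identity in these components, the weights and the signs.\<close>

definition derivative_tower :: "(nat \<Rightarrow> real \<Rightarrow> complex) \<Rightarrow> bool" where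
  "derivative_tower d \<longleftrightarrow> (\<forall>n x. (d n has_vector_derivative d (Suc n) x) (at x))"

lemma derivative_tower_vector_derivative [simp]:
  "derivative_tower d \<Longrightarrow> vector_derivative (d n) (at x) = d (Suc n) x"
  unfolding derivative_tower_def by (meson vector_derivative_at)

lemma derivative_tower_differentiable [simp]:
  "derivative_tower d \<Longrightarrow> d n differentiable (at x)"
  unfolding derivative_tower_def using differentiableI_vector by blast

lemma circle_fun_derivative_tower:
  "circle_fun u \<Longrightarrow> \<exists>d. derivative_tower d \<and> u = d 0"
  unfolding circle_fun_def smooth_fun_def derivative_tower_def by blast

lemma vector_derivative_divide_const_at [simp]:
  "f differentiable (at a) \<Longrightarrow>
    vector_derivative (\<lambda>x. f x / (c::complex)) (at a) = vector_derivative f (at a) / c"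
  using vector_derivative_mult_at[of f a "\<lambda>x. inverse c"] by (simp add: divide_inverse)

lemma homE:
  assumes "hom s (p, q)"
  obtains "even s" "q = (\<lambda>x. 0)" | "odd s" "p = (\<lambda>x. 0)"
  using assms unfolding hom_def by auto

lemma invariance_derivative_towers:
  fixes mu nu :: complex and sf sg sh :: nat
  assumes "derivative_tower a0" "derivative_tower a1" "derivative_tower b0"
    "derivative_tower b1" "derivative_tower c0" "derivative_tower c1"
    and "hom sf (a0 0, a1 0)" and "hom sg (b0 0, b1 0)" and "hom sh (c0 0, c1 0)"
  shows "lbr (-1) (mu + nu + 1/2) sf (a0 0, a1 0) (pbr mu nu sg (b0 0, b1 0) (c0 0, c1 0)) =
         sadd (sscale ((-1) ^ sf) (pbr mu nu (sf + sg) (lbr (-1) mu sf (a0 0, a1 0) (b0 0, b1 0)) (c0 0, c1 0)))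
              (sscale ((-1) ^ (sf * (sg + 1))) (pbr mu nu sg (b0 0, b1 0) (lbr (-1) nu sf (a0 0, a1 0) (c0 0, c1 0))))"
  using assms(7-9)
  \<comment> \<open>The vanishing components must be substituted unsimplified (no_asm_simp): otherwise the
    tower rule turns the derivative of a vanishing component into an unconstrained tower entry.\<close>
  by (elim homE;
      simp (no_asm_simp) add: assms(1-6) lbr_def pbr_def sadd_def ssub_def sscale_def smult_def
        sderiv_def Dbar_def fun_eq_iff minus_one_power_iff algebra_simps;
      simp add: field_simps)

theorem proposition2p2:
  fixes f g h :: sfun and mu nu :: complex and sf sg sh :: nat
  assumes "is_sfun f" and "is_sfun g" and "is_sfun h"
    and "hom sf f" and "hom sg g" and "hom sh h"
  shows "lbr (-1) (mu + nu + 1/2) sf f (pbr mu nu sg g h) =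
         sadd (sscale ((-1) ^ sf) (pbr mu nu (sf + sg) (lbr (-1) mu sf f g) h))
              (sscale ((-1) ^ (sf * (sg + 1))) (pbr mu nu sg g (lbr (-1) nu sf f h)))"
proof -
  obtain a0 a1 b0 b1 c0 c1 where towers: "derivative_tower a0" "derivative_tower a1"
      "derivative_tower b0" "derivative_tower b1" "derivative_tower c0" "derivative_tower c1"
    and components: "f = (a0 0, a1 0)" "g = (b0 0, b1 0)" "h = (c0 0, c1 0)"
    using assms(1-3) circle_fun_derivative_tower unfolding is_sfun_def by (metis prod.collapse)
  show ?thesis
    using invariance_derivative_towers[OF towers] assms(4-6) unfolding components by blast
qed

end
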